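(* Let $X=[0,1]$ with the usual metric, $U=\{0,1\}$, and let $F_0,F_1:[0,1]\to[0,1]$ be given by $F_0(x)=\frac12$ for $0\le x<\frac14$, $F_0(x)=2(x-\frac12)+1$ for $\frac14\le x<\frac12$, $F_0(x)=1$ for $\frac12\le x\le1$; and $F_1(x)=12(x-\frac14)^2+\frac14$ for $0\le x<\frac14$, $F_1(x)=(x-\frac14)^2+\frac14$ for $\frac14\le x\le1$. Consider the control system $x_{n+1}=F_{u_n}(x_n)$ and let $Q=[0,\frac14]$. Then $Q$ is mean equi-invariant but not finitely equi-invariant in the mean.
   Context: For $\omega=(\omega_0,\omega_1,\dots)\in\mathscr U=U^{\mathbb N_0}$ and $x\in X$: $\phi(0,x,\omega)=x$, $\phi(k,x,\omega)=F_{\omega_{k-1}}\circ\cdots\circ F_{\omega_0}(x)$. $d(y,Q)=\inf_{q\in Q}|y-q|$, $B(x,\delta)$ open ball, $\mathbb N=\{1,2,\dots\}$. A point $x\in Q$ is a mean equi-invariant point of $Q$ if for every $\varepsilon>0$ there exist $\delta>0$ and $\omega\in\mathscr U$ such that $\limsup_{n\to\infty}\frac1n\sum_{i=0}^{n-1}d(\phi(i,y,\omega),Q)<\varepsilon$ for all $y\in B(x,\delta)\cap Q$. It is a finitely equi-invariant point in the mean of $Q$ if for every $\varepsilon>0$ there exist $\delta>0$ and a finite set $F\subset\mathscr U$ such that for every $y\in B(x,\delta)\cap Q$ there is $\omega\in F$ with $\frac1n\sum_{i=0}^{n-1}d(\phi(i,y,\omega),Q)<\varepsilon$ for all $n\in\mathbb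 N$. $Q$ has one of these properties if all its points do. *)

theory Defs
  imports "HOL-Analysis.Analysis" "HOL-Library.Liminf_Limsup"
begin

fun phi :: "('u \<Rightarrow> 'a \<Rightarrow> 'a) \<Rightarrow> nat \<Rightarrow> 'a \<Rightarrow> (nat \<Rightarrow> 'u) \<Rightarrow> 'a" where
  "phi F 0 x \<omega> = x"
| "phi F (Suc k) x \<omega> = F (\<omega> k) (phi F k x \<omega>)"

definition ctrl_seqs :: "'u set \<Rightarrow> (nat \<Rightarrow> 'u) set" where
  "ctrl_seqs U = {\<omega>. \<forall>i. \<omega> i \<in> U}"

definition avg_dist :: "('u \<Rightarrow> 'a::metric_space \<Rightarrow> 'a) \<Rightarrow> 'a set \<Rightarrow> 'a \<Rightarrow> (nat \<Rightarrow> 'u) \<Rightarrow> nat \<Rightarrow> real" where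
  "avg_dist F Q y \<omega> n = (\<Sum>i<n. infdist (phi F i y \<omega>) Q) / real n"

definition mean_equi_invariant_point ::
  "('u \<Rightarrow> 'a::metric_space \<Rightarrow> 'a) \<Rightarrow> 'u set \<Rightarrow> 'a set \<Rightarrow> 'a \<Rightarrow> bool" where
  "mean_equi_invariant_point F U Q x \<longleftrightarrow> x \<in> Q \<and>
     (\<forall>\<epsilon>>0. \<exists>\<delta>>0. \<exists>\<omega>\<in>ctrl_seqs U. \<forall>y\<in>ball x \<delta> \<inter> Q.
        limsup (\<lambda>n. ereal (avg_dist F Q y \<omega> n)) < ereal \<epsilon>)"

definition mean_equi_invariant ::
  "('u \<Rightarrow> 'a::metric_space \<Rightarrow> 'a) \<Rightarrow> 'u set \<Rightarrow> 'a set \<Rightarrow> bool" where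
  "mean_equi_invariant F U Q \<longleftrightarrow> (\<forall>x\<in>Q. mean_equi_invariant_point F U Q x)"

definition fin_equi_invariant_mean_point ::
  "('u \<Rightarrow> 'a::metric_space \<Rightarrow> 'a) \<Rightarrow> 'u set \<Rightarrow> 'a set \<Rightarrow> 'a \<Rightarrow> bool" where
  "fin_equi_invariant_mean_point F U Q x \<longleftrightarrow> x \<in> Q \<and>
     (\<forall>\<epsilon>>0. \<exists>\<delta>>0. \<exists>S. finite S \<and> S \<subseteq> ctrl_seqs U \<and>
        (\<forall>y\<in>ball x \<delta> \<inter> Q. \<exists>\<omega>\<in>S. \<forall>n\<ge>1. avg_dist F Q y \<omega> n < \<epsilon>))"

definition fin_equi_invariant_mean ::
  "('u \<Rightarrow> 'a::metric_space \<Rightarrow> 'a) \<Rightarrow> 'u set \<Rightarrow> 'a set \<Rightarrow> bool" where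
  "fin_equi_invariant_mean F U Q \<longleftrightarrow> (\<forall>x\<in>Q. fin_equi_invariant_mean_point F U Q x)"

text \<open>The example maps on X = [0,1] (values outside [0,1] are irrelevant:
  trajectories from Q stay in [0,1]).\<close>
definition F0 :: "real \<Rightarrow> real" where
  "F0 x = (if x < 1/4 then 1/2 else if x < 1/2 then 2 * (x - 1/2) + 1 else 1)"

definition F1 :: "real \<Rightarrow> real" where
  "F1 x = (if x < 1/4 then 12 * (x - 1/4)^2 + 1/4 else (x - 1/4)^2 + 1/4)"

definition Fex :: "nat \<Rightarrow> real \<Rightarrow> real" where
  "Fex u = (if u = 0 then F0 else F1)"

end

theory Submission
  imports Defs
begin

text \<open>Applying F1 forever drives every point of Q into the fixed point 1/4 at a geometric rate,
  so the distances to Q are summable and their running average tends to 0 for all starting points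
  simultaneously. On the other hand both F0 and F1 push 0 out of Q by at least 1/4 in one step,
  so from 0 the average over the first two steps is at least 1/8 whatever control is chosen;
  since the finite notion bounds the averages for every n, not only asymptotically, it fails at 0.\<close>

lemma infdist_atLeastAtMost_right:
  fixes a b y :: real
  assumes "a \<le> b" "b \<le> y"
  shows "infdist y {a..b} = y - b"
proof (rule antisym)
  show "infdist y {a..b} \<le> y - b"
    using assms by (intro infdist_le2[of b]) (auto simp: dist_real_def)
  show "y - b \<le> infdist y {a..b}"
    unfolding infdist_def using assms by (auto intro!: cINF_greatest simp: dist_real_def)
qed

lemma Cesaro_summable_tendsto_zero:
  fixes f :: "nat \<Rightarrow> real"
  assumes "summable f" "\<And>i. 0 \<le> f i"
  shows "(\<lambda>n. (\<Sum>i<n. f i) / real n) \<longlonglongrightarrow> 0"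
proof (rule tendsto_sandwich[of "\<lambda>_. 0" _ _ "\<lambda>n. suminf f / real n"])
  show "\<forall>\<^sub>F n in sequentially. 0 \<le> (\<Sum>i<n. f i) / real n"
    using assms(2) by (simp add: sum_nonneg)
  show "\<forall>\<^sub>F n in sequentially. (\<Sum>i<n. f i) / real n \<le> suminf f / real n"
    using assms by (intro always_eventually allI divide_right_mono sum_le_suminf) auto
  show "(\<lambda>n. suminf f / real n) \<longlonglongrightarrow> 0"
    by (rule lim_const_over_n)
qed simp

lemma mean_equi_invariantI:
  assumes "\<omega> \<in> ctrl_seqs U"
    and "\<And>y. y \<in> Q \<Longrightarrow> avg_dist F Q y \<omega> \<longlonglongrightarrow> 0"
  shows "mean_equi_invariant F U Q"
  unfolding mean_equi_invariant_def mean_equi_invariant_point_def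
proof (intro ballI conjI allI impI)
  fix x and \<epsilon> :: real
  assume "\<epsilon> > 0"
  have "limsup (\<lambda>n. ereal (avg_dist F Q y \<omega> n)) < ereal \<epsilon>" if "y \<in> Q" for y
  proof -
    have "limsup (\<lambda>n. ereal (avg_dist F Q y \<omega> n)) = ereal 0"
      using assms(2)[OF that] by (intro lim_imp_Limsup tendsto_ereal) simp_all
    then show ?thesis
      using \<open>\<epsilon> > 0\<close> by simp
  qed
  then show "\<exists>\<delta>>0. \<exists>\<omega>\<in>ctrl_seqs U. \<forall>y\<in>ball x \<delta> \<inter> Q. limsup (\<lambda>n. ereal (avg_dist F Q y \<omega> n)) < ereal \<epsilon>"
    using assms(1) by (intro exI[of _ 1]) auto
qed

lemma not_fin_equi_invariant_meanI:
  assumes "x \<in> Q" "\<epsilon> > 0"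
    and "\<And>\<omega>. \<omega> \<in> ctrl_seqs U \<Longrightarrow> \<exists>n\<ge>1. \<epsilon> \<le> avg_dist F Q x \<omega> n"
  shows "\<not> fin_equi_invariant_mean F U Q"
proof
  assume "fin_equi_invariant_mean F U Q"
  then have "fin_equi_invariant_mean_point F U Q x"
    using assms(1) unfolding fin_equi_invariant_mean_def by blast
  then obtain \<delta> S where "\<delta> > 0" "S \<subseteq> ctrl_seqs U"
    and "\<forall>y\<in>ball x \<delta> \<inter> Q. \<exists>\<omega>\<in>S. \<forall>n\<ge>1. avg_dist F Q y \<omega> n < \<epsilon>"
    using assms(2) unfolding fin_equi_invariant_mean_point_def by meson
  moreover have "x \<in> ball x \<delta> \<inter> Q"
    using \<open>\<delta> > 0\<close> assms(1) by simp
  ultimately obtain \<omega> where "\<omega> \<in> ctrl_seqs U" "\<forall>n\<ge>1. avg_dist F Q x \<omega> n < \<epsilon>"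
    by blast
  then show False
    using assms(3) by (meson not_le)
qed

lemma F1_maps_Q_into_upper_part:
  assumes "0 \<le> y" "y \<le> 1/4"
  shows "1/4 \<le> F1 y \<and> F1 y \<le> 1"
proof -
  have "(y - 1/4)^2 \<le> (1/4)^2"
    using assms by (intro power2_le_iff_abs_le[THEN iffD2]) auto
  then show ?thesis
    by (simp add: F1_def power2_eq_square)
qed

lemma F1_contracts_towards_quarter:
  assumes "1/4 \<le> x" "x \<le> 1"
  shows "1/4 \<le> F1 x \<and> F1 x - 1/4 \<le> 3/4 * (x - 1/4)"
proof -
  have "(x - 1/4)^2 \<le> 3/4 * (x - 1/4)"
    unfolding power2_eq_square using assms by (intro mult_right_mono) auto
  then show ?thesis
    using assms by (simp add: F1_def)
qed

lemma phi_F1_bounds: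
  assumes "0 \<le> y" "y \<le> 1/4"
  shows "1/4 \<le> phi Fex (Suc i) y (\<lambda>_. 1) \<and> phi Fex (Suc i) y (\<lambda>_. 1) \<le> 1/4 + (3/4)^Suc i"
proof (induction i)
  case 0
  then show ?case
    using F1_maps_Q_into_upper_part[OF assms] by (simp add: Fex_def)
next
  case (Suc i)
  let ?p = "phi Fex (Suc i) y (\<lambda>_. 1)"
  have "(3/4::real)^Suc i \<le> 3/4"
    using power_le_one[of "3/4::real" i] by simp
  then have "1/4 \<le> F1 ?p \<and> F1 ?p - 1/4 \<le> 3/4 * (?p - 1/4)"
    using Suc by (intro F1_contracts_towards_quarter) auto
  moreover have "3/4 * (?p - 1/4) \<le> (3/4)^Suc (Suc i)"
    using Suc by simp
  moreover have "phi Fex (Suc (Suc i)) y (\<lambda>_. 1) = F1 ?p"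
    by (simp add: Fex_def)
  ultimately show ?case
    by simp
qed

lemma infdist_phi_F1_le:
  assumes "0 \<le> y" "y \<le> 1/4"
  shows "infdist (phi Fex i y (\<lambda>_. 1)) {0..1/4} \<le> (3/4)^i"
proof (cases i)
  case 0
  then show ?thesis
    using assms by simp
next
  case (Suc j)
  then show ?thesis
    using phi_F1_bounds[OF assms, of j] by (simp add: infdist_atLeastAtMost_right)
qed

lemma avg_dist_F1_tendsto_zero:
  assumes "y \<in> {0..1/4}"
  shows "avg_dist Fex {0..1/4} y (\<lambda>_. 1) \<longlonglongrightarrow> 0"
proof -
  have "norm (infdist (phi Fex i y (\<lambda>_. 1)) {0..1/4::real}) \<le> (3/4)^i" for i
    using assms infdist_phi_F1_le by (simp add: infdist_nonneg)
  then have "summable (\<lambda>i. infdist (phi Fex i y (\<lambda>_. 1)) {0..1/4::real})"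
    by (intro summable_comparison_test'[OF summable_geometric[of "3/4::real"], of 0]) auto
  then show ?thesis
    unfolding avg_dist_def by (intro Cesaro_summable_tendsto_zero infdist_nonneg)
qed

lemma avg_dist_from_zero:
  assumes "\<omega> \<in> ctrl_seqs {0, 1}"
  shows "1/8 \<le> avg_dist Fex {0..1/4} 0 \<omega> 2"
proof -
  have "1/2 \<le> Fex (\<omega> 0) 0"
    using assms by (auto simp: ctrl_seqs_def Fex_def F0_def F1_def power2_eq_square)
  then show ?thesis
    by (simp add: avg_dist_def numeral_2_eq_2 infdist_atLeastAtMost_right)
qed

theorem mainTheorem16:
  shows "mean_equi_invariant Fex {0, 1} {0..1/4}
         \<and> \<not> fin_equi_invariant_mean Fex {0, 1} {0..1/4}"
proof
  show "mean_equi_invariant Fex {0, 1} {0..1/4}"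
    using avg_dist_F1_tendsto_zero
    by (intro mean_equi_invariantI[of "\<lambda>_. 1"]) (auto simp: ctrl_seqs_def)
  show "\<not> fin_equi_invariant_mean Fex {0, 1} {0..1/4}"
    using avg_dist_from_zero
    by (intro not_fin_equi_invariant_meanI[of 0 _ "1/8"]) (auto intro!: exI[of _ 2])
qed

end
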